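(* Let $f:\mathbb{R}^n\to\mathbb{R}$ be differentiable and $L>0$. Then $f$ satisfies $$\|\nabla f(u_1)-\nabla f(u_2)\|\le L\|u_1-u_2\|\quad\text{for all }(u_1,u_2)\in\mathbb{R}^n\times\mathbb{R}^n$$ if and only if, for all $(u_1,u_2)\in\mathbb{R}^n\times\mathbb{R}^n$, $$f(u_1)\le f(u_2)+\Big\langle \tfrac{\nabla f(u_1)+\nabla f(u_2)}{2},\,u_1-u_2\Big\rangle+\tfrac{L}{4}\|u_1-u_2\|^2-\tfrac{1}{4L}\|\nabla f(u_1)-\nabla f(u_2)\|^2 .$$
   Context: $\|\cdot\|$ is the Euclidean norm and $\langle\cdot,\cdot\rangle$ the standard inner product on $\mathbb{R}^n$. *)

theory Defs
  imports "HOL-Analysis.Analysis"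
begin

definition grad :: "('a::euclidean_space \<Rightarrow> real) \<Rightarrow> 'a \<Rightarrow> 'a" where
  "grad f x = (\<Sum>b\<in>Basis. frechet_derivative f (at x) b *\<^sub>R b)"

end

theory Submission
  imports Defs
begin

text \<open>An \<open>L\<close>-Lipschitz gradient gives the two-sided quadratic bounds
  \<open>|f(u + v) - f(u) - \<langle>\<nabla>f(u), v\<rangle>| \<le> L/2 \<parallel>v\<parallel>\<^sup>2\<close>. Applying the upper bound around \<open>u\<^sub>2\<close> and the
  lower bound around \<open>u\<^sub>1\<close> at the common point \<open>w = (u\<^sub>1 + u\<^sub>2)/2 + (\<nabla>f(u\<^sub>1) - \<nabla>f(u\<^sub>2))/(2L)\<close>
  and subtracting yields the inequality; this choice of \<open>w\<close> is what makes the quadratic terms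
  collapse to \<open>L/4 \<parallel>u\<^sub>1 - u\<^sub>2\<parallel>\<^sup>2 - 1/(4L) \<parallel>\<nabla>f(u\<^sub>1) - \<nabla>f(u\<^sub>2)\<parallel>\<^sup>2\<close>.
  Conversely, adding the inequality to its copy with \<open>u\<^sub>1\<close> and \<open>u\<^sub>2\<close> swapped cancels the
  function values and inner products and leaves
  \<open>\<parallel>\<nabla>f(u\<^sub>1) - \<nabla>f(u\<^sub>2)\<parallel>\<^sup>2 \<le> L\<^sup>2 \<parallel>u\<^sub>1 - u\<^sub>2\<parallel>\<^sup>2\<close>.\<close>

lemma has_derivative_grad:
  fixes f :: "'a::euclidean_space \<Rightarrow> real"
  assumes "f differentiable (at x)"
  shows "(f has_derivative (\<lambda>h. grad f x \<bullet> h)) (at x)"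
proof -
  let ?D = "frechet_derivative f (at x)"
  have D: "(f has_derivative ?D) (at x)"
    using assms frechet_derivative_works by blast
  then have "linear ?D"
    using has_derivative_linear by blast
  have "?D h = grad f x \<bullet> h" for h
  proof -
    have "?D h = ?D (\<Sum>b\<in>Basis. (h \<bullet> b) *\<^sub>R b)"
      by (simp add: euclidean_representation)
    also have "\<dots> = (\<Sum>b\<in>Basis. (h \<bullet> b) * ?D b)"
      using \<open>linear ?D\<close> by (simp add: linear_sum linear_scale)
    also have "\<dots> = grad f x \<bullet> h"
      unfolding grad_def inner_sum_left by (simp add: mult.commute inner_commute)
    finally show ?thesis .
  qed
  then have "?D = (\<lambda>h. grad f x \<bullet> h)"
    by blast
  with D show ?thesis
    by simp
qed

lemma lipschitz_gradient_upper_bound: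
  fixes f :: "'a::real_inner \<Rightarrow> real"
  assumes deriv: "\<And>x. (f has_derivative (\<lambda>h. g x \<bullet> h)) (at x)"
    and lip: "\<And>x y. norm (g x - g y) \<le> L * norm (x - y)"
  shows "f (y + v) \<le> f y + g y \<bullet> v + L / 2 * (norm v)\<^sup>2"
proof -
  define \<phi> where "\<phi> t = f (y + t *\<^sub>R v) - t * (g y \<bullet> v) - L / 2 * t\<^sup>2 * (norm v)\<^sup>2" for t
  have deriv_nonpos: "\<exists>D. (\<phi> has_real_derivative D) (at t) \<and> D \<le> 0" if t: "0 \<le> t" "t \<le> 1" for t
  proof -
    have "((\<lambda>t. y + t *\<^sub>R v) has_derivative (\<lambda>s. s *\<^sub>R v)) (at t)"
      by (auto intro!: derivative_eq_intros)
    from diff_chain_at[OF this deriv]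
    have "((\<lambda>t. f (y + t *\<^sub>R v)) has_derivative (\<lambda>s. s * (g (y + t *\<^sub>R v) \<bullet> v))) (at t)"
      by (simp add: o_def)
    then have "((\<lambda>t. f (y + t *\<^sub>R v)) has_real_derivative g (y + t *\<^sub>R v) \<bullet> v) (at t)"
      by (simp add: has_field_derivative_def mult_commute_abs)
    then have "(\<phi> has_real_derivative g (y + t *\<^sub>R v) \<bullet> v - g y \<bullet> v - L * t * (norm v)\<^sup>2) (at t)"
      unfolding \<phi>_def by (auto intro!: derivative_eq_intros)
    moreover have "g (y + t *\<^sub>R v) \<bullet> v - g y \<bullet> v \<le> L * t * (norm v)\<^sup>2"
    proof -
      have "g (y + t *\<^sub>R v) \<bullet> v - g y \<bullet> v \<le> norm (g (y + t *\<^sub>R v) - g y) * norm v"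
        using norm_cauchy_schwarz by (metis inner_diff_left)
      also have "\<dots> \<le> L * norm (t *\<^sub>R v) * norm v"
        using lip[of "y + t *\<^sub>R v" y] by (simp add: mult_right_mono)
      also have "\<dots> = L * t * (norm v)\<^sup>2"
        using t by (simp add: power2_eq_square)
      finally show ?thesis .
    qed
    ultimately show ?thesis
      by (metis diff_le_0_iff_le)
  qed
  have "\<phi> 1 \<le> \<phi> 0"
    by (rule DERIV_nonpos_imp_nonincreasing) (use deriv_nonpos in auto)
  then show ?thesis
    unfolding \<phi>_def by simp
qed

lemma lipschitz_gradient_lower_bound:
  fixes f :: "'a::real_inner \<Rightarrow> real"
  assumes deriv: "\<And>x. (f has_derivative (\<lambda>h. g x \<bullet> h)) (at x)"
    and lip: "\<And>x y. norm (g x - g y) \<le> L * norm (x - y)"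
  shows "f y + g y \<bullet> v - L / 2 * (norm v)\<^sup>2 \<le> f (y + v)"
proof -
  have neg_deriv: "((\<lambda>x. - f x) has_derivative (\<lambda>h. (- g x) \<bullet> h)) (at x)" for x
    using has_derivative_minus[OF deriv[of x]] by simp
  have neg_lip: "norm (- g x - - g y) \<le> L * norm (x - y)" for x y
    using lip[of x y] by (simp add: norm_minus_commute)
  have "- f (y + v) \<le> - f y + (- g y) \<bullet> v + L / 2 * (norm v)\<^sup>2"
    by (rule lipschitz_gradient_upper_bound[where f = "\<lambda>x. - f x", OF neg_deriv neg_lip])
  then show ?thesis
    by simp
qed

lemma lipschitz_gradient_imp_interpolation:
  fixes f :: "'a::real_inner \<Rightarrow> real"
  assumes deriv: "\<And>x. (f has_derivative (\<lambda>h. g x \<bullet> h)) (at x)"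
    and lip: "\<And>x y. norm (g x - g y) \<le> L * norm (x - y)"
    and "L > 0"
  shows "f x \<le> f y + ((g x + g y) /\<^sub>R 2) \<bullet> (x - y) + L / 4 * (norm (x - y))\<^sup>2
                - 1 / (4 * L) * (norm (g x - g y))\<^sup>2"
proof -
  define p where "p = (x - y) /\<^sub>R 2"
  define e where "e = (g y - g x) /\<^sub>R (2 * L)"
  have same_point: "x + (- p - e) = y + (p - e)"
    unfolding p_def by (simp add: algebra_simps flip: scaleR_add_left)
  have upper: "f (y + (p - e)) \<le> f y + g y \<bullet> (p - e) + L / 2 * (norm (p - e))\<^sup>2"
    by (rule lipschitz_gradient_upper_bound[OF deriv lip])
  have lower: "f x + g x \<bullet> (- p - e) - L / 2 * (norm (- p - e))\<^sup>2 \<le> f (x + (- p - e))"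
    by (rule lipschitz_gradient_lower_bound[OF deriv lip])
  have inner_e: "d \<bullet> (d /\<^sub>R (2 * L)) = 2 * (1 / (4 * L) * (norm d)\<^sup>2)" for d :: 'a
    using \<open>L > 0\<close> by (simp add: power2_norm_eq_inner field_simps)
  have norm_e: "L * (norm (d /\<^sub>R (2 * L)))\<^sup>2 = 1 / (4 * L) * (norm d)\<^sup>2" for d :: 'a
    using \<open>L > 0\<close> by (simp add: power2_eq_square field_simps)
  have "f x \<le> f y + (g y \<bullet> (p - e) - g x \<bullet> (- p - e))
                + L / 2 * ((norm (p - e))\<^sup>2 + (norm (- p - e))\<^sup>2)"
    using upper lower unfolding same_point by (simp add: algebra_simps)
  also have "g y \<bullet> (p - e) - g x \<bullet> (- p - e) = ((g x + g y) /\<^sub>R 2) \<bullet> (x - y) - (g y - g x) \<bullet> e"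
    unfolding p_def by (simp add: algebra_simps)
  also have "(norm (p - e))\<^sup>2 + (norm (- p - e))\<^sup>2 = (norm (x - y))\<^sup>2 / 2 + 2 * (norm e)\<^sup>2"
  proof -
    have "(norm (p - e))\<^sup>2 + (norm (- p - e))\<^sup>2 = 2 * (norm p)\<^sup>2 + 2 * (norm e)\<^sup>2"
      by (simp add: power2_norm_eq_inner inner_diff_left inner_diff_right inner_commute[of e p])
    moreover have "(norm p)\<^sup>2 = (norm (x - y))\<^sup>2 / 4"
      unfolding p_def by (simp add: power_divide)
    ultimately show ?thesis
      by simp
  qed
  also have "(g y - g x) \<bullet> e = 2 * (1 / (4 * L) * (norm (g x - g y))\<^sup>2)"
    unfolding e_def inner_e norm_minus_commute[of "g y"] ..
  also have "L / 2 * ((norm (x - y))\<^sup>2 / 2 + 2 * (norm e)\<^sup>2)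
      = L / 4 * (norm (x - y))\<^sup>2 + 1 / (4 * L) * (norm (g x - g y))\<^sup>2"
    unfolding e_def using norm_e[of "g y - g x"] by (simp add: norm_minus_commute algebra_simps)
  finally show ?thesis
    by simp
qed

lemma interpolation_imp_lipschitz_gradient:
  fixes f :: "'a::real_inner \<Rightarrow> real"
  assumes interp: "\<And>x y. f x \<le> f y + ((g x + g y) /\<^sub>R 2) \<bullet> (x - y) + L / 4 * (norm (x - y))\<^sup>2
                             - 1 / (4 * L) * (norm (g x - g y))\<^sup>2"
    and "L > 0"
  shows "norm (g x - g y) \<le> L * norm (x - y)"
proof -
  let ?a = "norm (g x - g y)" and ?b = "norm (x - y)"
  have "((g y + g x) /\<^sub>R 2) \<bullet> (y - x) = - (((g x + g y) /\<^sub>R 2) \<bullet> (x - y))"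
    by (simp add: algebra_simps)
  then have "0 \<le> L / 2 * ?b\<^sup>2 - 1 / (2 * L) * ?a\<^sup>2"
    using interp[of x y] interp[of y x] by (simp add: norm_minus_commute)
  then have "0 \<le> 2 * L * (L / 2 * ?b\<^sup>2 - 1 / (2 * L) * ?a\<^sup>2)"
    using \<open>L > 0\<close> by simp
  also have "\<dots> = (L * ?b)\<^sup>2 - ?a\<^sup>2"
    using \<open>L > 0\<close> by (simp add: field_simps power2_eq_square)
  finally have "?a\<^sup>2 \<le> (L * ?b)\<^sup>2"
    by simp
  moreover have "0 \<le> L * ?b"
    using \<open>L > 0\<close> by simp
  ultimately show ?thesis
    by (rule power2_le_imp_le)
qed

theorem proposition2p1:
  fixes f :: "real ^ 'n \<Rightarrow> real" and L :: real
  assumes "\<And>x. f differentiable (at x)"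
    and "L > 0"
  shows "(\<forall>u1 u2. norm (grad f u1 - grad f u2) \<le> L * norm (u1 - u2)) \<longleftrightarrow>
         (\<forall>u1 u2. f u1 \<le> f u2 + ((grad f u1 + grad f u2) /\<^sub>R 2) \<bullet> (u1 - u2)
                     + L / 4 * (norm (u1 - u2))\<^sup>2
                     - 1 / (4 * L) * (norm (grad f u1 - grad f u2))\<^sup>2)"
proof (intro iffI allI)
  fix u1 u2
  assume "\<forall>u1 u2. norm (grad f u1 - grad f u2) \<le> L * norm (u1 - u2)"
  then show "f u1 \<le> f u2 + ((grad f u1 + grad f u2) /\<^sub>R 2) \<bullet> (u1 - u2)
                + L / 4 * (norm (u1 - u2))\<^sup>2 - 1 / (4 * L) * (norm (grad f u1 - grad f u2))\<^sup>2"
    using lipschitz_gradient_imp_interpolation[OF has_derivative_grad[OF assms(1)] _ \<open>L > 0\<close>]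
    by blast
next
  fix u1 u2
  assume "\<forall>u1 u2. f u1 \<le> f u2 + ((grad f u1 + grad f u2) /\<^sub>R 2) \<bullet> (u1 - u2)
                     + L / 4 * (norm (u1 - u2))\<^sup>2
                     - 1 / (4 * L) * (norm (grad f u1 - grad f u2))\<^sup>2"
  then show "norm (grad f u1 - grad f u2) \<le> L * norm (u1 - u2)"
    using interpolation_imp_lipschitz_gradient[OF _ \<open>L > 0\<close>] by blast
qed

end
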